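(* Let $F$ be a field of characteristic zero and $n,m$ natural numbers. The set of elements $l\in W(n,m)$ such that every standard basis element $b=e^{\alpha}x^{\beta}\partial_k$ of $W(n,m)$ is an eigenvector of $\mathrm{ad}\,l$ (i.e. $[b,l]\in Fb$ for all such $b$) is exactly the $m$-dimensional subspace spanned by $\{x_t\partial_t: n+1\le t\le n+m\}$; this is a maximal torus of $W(n,m)$ with respect to the standard basis.
   Context: Let $A_{n,m}$ be the commutative $F$-algebra with $F$-basis the symbols $e^{\alpha}x^{\beta}=e^{a_1x_1}\cdots e^{a_nx_n}x_1^{b_1}\cdots x_{n+m}^{b_{n+m}}$, $\alpha\in\mathbb Z^n$, $\beta\in\mathbb Z^{n+m}$, with multiplication $e^{\alpha}x^{\beta}\cdot e^{\gamma}x^{\delta}=e^{\alpha+\gamma}x^{\beta+\delta}$. For $1\le i\le n+m$, $\partial_i(e^{\alpha}x^{\beta})=a_i e^{\alpha}x^{\beta}+b_i e^{\alpha}x^{\beta-\epsilon_i}$, where $a_i:=0$ for $i>n$. $W(n,m)$ is the Lie algebra with standard basis $\{e^{\alpha}x^{\beta}\partial_i\}$ and bracket $[f\partial_i,g\partial_j]=f\partial_i(g)\partial_j-g\partial_j(f)\partial_i$. Here $x_t\partial_t$ denotes $x^{\epsilon_t}\partial_t$. *)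

theory Defs
  imports Main
begin

text \<open>Indices are 0-based: alpha :: nat => int with alpha t = 0 for t >= n
(exponents of e^{x_1},...,e^{x_n}), beta :: nat => int with beta t = 0 for
t >= n+m (exponents of x_1,...,x_{n+m}), and k < n+m (the derivation index).
The triple (alpha, beta, k) names the standard basis element e^alpha x^beta d_k.\<close>

type_synonym widx = "(nat \<Rightarrow> int) \<times> (nat \<Rightarrow> int) \<times> nat"

definition valid_idx :: "nat \<Rightarrow> nat \<Rightarrow> widx \<Rightarrow> bool" where
  "valid_idx n m i = (case i of (\<alpha>, \<beta>, k) \<Rightarrow>
      (\<forall>t\<ge>n. \<alpha> t = 0) \<and> (\<forall>t\<ge>n+m. \<beta> t = 0) \<and> k < n + m)"

definition Wnm :: "nat \<Rightarrow> nat \<Rightarrow> (widx \<Rightarrow> 'a::field_char_0) set" where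
  "Wnm n m = {f. finite {i. f i \<noteq> 0} \<and> (\<forall>i. f i \<noteq> 0 \<longrightarrow> valid_idx n m i)}"

definition wbasis :: "widx \<Rightarrow> widx \<Rightarrow> 'a::field_char_0" where
  "wbasis i = (\<lambda>r. if r = i then 1 else 0)"

definition unitv :: "nat \<Rightarrow> nat \<Rightarrow> int" where
  "unitv i = (\<lambda>t. if t = i then 1 else 0)"

text \<open>Bracket of basis elements:
 [e^a x^b d_i, e^c x^d d_j] = e^a x^b d_i(e^c x^d) d_j - e^c x^d d_j(e^a x^b) d_i,
 with d_i(e^c x^d) = c_i e^c x^d + d_i e^c x^{d - eps_i}, c_i := 0 for i >= n.\<close>
definition brb :: "nat \<Rightarrow> widx \<Rightarrow> widx \<Rightarrow> widx \<Rightarrow> 'a::field_char_0" where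
  "brb n I J r = (case I of (\<alpha>, \<beta>, i) \<Rightarrow> case J of (\<gamma>, \<delta>, j) \<Rightarrow>
     let s = (\<lambda>t. \<alpha> t + \<gamma> t); p = (\<lambda>t. \<beta> t + \<delta> t) in
       of_int (if i < n then \<gamma> i else 0) * (if r = (s, p, j) then 1 else 0)
     + of_int (\<delta> i) * (if r = (s, (\<lambda>t. p t - unitv i t), j) then 1 else 0)
     - of_int (if j < n then \<alpha> j else 0) * (if r = (s, p, i) then 1 else 0)
     - of_int (\<beta> j) * (if r = (s, (\<lambda>t. p t - unitv j t), i) then 1 else 0))"

definition wbr :: "nat \<Rightarrow> (widx \<Rightarrow> 'a::field_char_0) \<Rightarrow> (widx \<Rightarrow> 'a) \<Rightarrow> widx \<Rightarrow> 'a" where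
  "wbr n f g = (\<lambda>r. \<Sum>I\<in>{i. f i \<noteq> 0}. \<Sum>J\<in>{j. g j \<noteq> 0}. f I * g J * brb n I J r)"

definition xd :: "nat \<Rightarrow> widx" where
  "xd t = ((\<lambda>_. 0), unitv t, t)"

end

theory Submission imports Defs begin

text \<open>If every standard basis element b is an eigenvector of ad l, all coefficients of [b, l]
away from b vanish. The coefficient of e^\<gamma> x^\<delta> \<partial>_j in [x_j \<partial>_j, l] minus that of
e^\<gamma> x^(\<delta> - \<epsilon>_j) \<partial>_j in [\<partial>_j, l] equals -l(e^\<gamma> x^\<delta> \<partial>_j), so l is supported on the
x_j \<partial>_j. For j \<le> n, comparing [e^(x_j) \<partial>_j, l] with [\<partial>_j, l] in the same way removes x_j \<partial>_j
as well. Conversely, for t > n the element x_t \<partial>_t acts diagonally: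
[e^\<alpha> x^\<beta> \<partial>_k, x_t \<partial>_t] = (\<delta>_kt - \<beta>_t) e^\<alpha> x^\<beta> \<partial>_k.\<close>

definition ad_diagonal :: "nat \<Rightarrow> nat \<Rightarrow> (widx \<Rightarrow> 'a::field_char_0) \<Rightarrow> bool" where
  "ad_diagonal n m l \<longleftrightarrow>
     (\<forall>b. valid_idx n m b \<longrightarrow> (\<exists>c. wbr n (wbasis b) l = (\<lambda>r. c * wbasis b r)))"

definition torus_elem :: "nat \<Rightarrow> nat \<Rightarrow> (nat \<Rightarrow> 'a::field_char_0) \<Rightarrow> widx \<Rightarrow> 'a" where
  "torus_elem n m c = (\<lambda>r. \<Sum>t\<in>{n..<n+m}. c t * wbasis (xd t) r)"

lemma xd_eq_iff: "xd s = xd t \<longleftrightarrow> s = t"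
  by (auto simp: xd_def)

lemma unitv_neq_0: "unitv j \<noteq> (\<lambda>_. 0)"
  by (auto simp: unitv_def fun_eq_iff)

lemma wbr_wbasis_left: "wbr n (wbasis b) l r = (\<Sum>J\<in>{j. l j \<noteq> 0}. l J * brb n b J r)"
proof -
  have "{i. (wbasis b i :: 'a) \<noteq> 0} = {b}" by (auto simp: wbasis_def)
  then show ?thesis by (simp add: wbr_def wbasis_def)
qed

lemma brb_xd_minus_brb_d:
  "brb n (xd j) J (\<gamma>, \<delta>, j)
   - brb n ((\<lambda>_. 0), (\<lambda>_. 0), j) J (\<gamma>, (\<lambda>t. \<delta> t - unitv j t), j)
   = (if J = (\<gamma>, \<delta>, j) then -1 else (0::'a::field_char_0))"
proof -
  obtain g d k where J: "J = (g, d, k)" by (cases J) auto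
  have shift: "((\<gamma>, \<delta>, j) = (\<lambda>t. 0 + g t, \<lambda>t. unitv j t + d t, k)) =
               ((\<gamma>, (\<lambda>t. \<delta> t - unitv j t), j) = (\<lambda>t. 0 + g t, \<lambda>t. 0 + d t, k))"
    "((\<gamma>, \<delta>, j) = (\<lambda>t. 0 + g t, \<lambda>t. unitv j t + d t - unitv j t, k)) =
     ((\<gamma>, (\<lambda>t. \<delta> t - unitv j t), j) = (\<lambda>t. 0 + g t, \<lambda>t. 0 + d t - unitv j t, k))"
    by (auto simp: fun_eq_iff algebra_simps)
  have surviving: "(of_int (unitv j k) *
      (if (\<gamma>, \<delta>, j) = (\<lambda>t. 0 + g t, \<lambda>t. unitv j t + d t - unitv k t, j) then 1 else 0) :: 'a)
      = (if (g, d, k) = (\<gamma>, \<delta>, j) then 1 else 0)"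
    by (auto simp: unitv_def fun_eq_iff)
  show ?thesis unfolding J xd_def brb_def Let_def
    by (simp only: prod.case shift surviving) simp
qed

lemma brb_exp_minus_brb_d:
  assumes "j < n"
  shows "brb n (unitv j, (\<lambda>_. 0), j) J (unitv j, unitv j, j)
   - brb n ((\<lambda>_. 0), (\<lambda>_. 0), j) J (xd j)
   = (if J = xd j then -1 else (0::'a::field_char_0))"
proof -
  obtain g d k where J: "J = (g, d, k)" by (cases J) auto
  have shift: "((unitv j, unitv j, j) = (\<lambda>t. unitv j t + g t, \<lambda>t. 0 + d t, k)) =
               (((\<lambda>_. 0), unitv j, j) = (\<lambda>t. 0 + g t, \<lambda>t. 0 + d t, k))"
    "((unitv j, unitv j, j) = (\<lambda>t. unitv j t + g t, \<lambda>t. 0 + d t - unitv j t, k)) =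
     (((\<lambda>_. 0), unitv j, j) = (\<lambda>t. 0 + g t, \<lambda>t. 0 + d t - unitv j t, k))"
    by (auto simp: fun_eq_iff algebra_simps)
  have surviving: "(of_int (if k < n then unitv j k else 0) *
      (if (unitv j, unitv j, j) = (\<lambda>t. unitv j t + g t, \<lambda>t. 0 + d t, j) then 1 else 0) :: 'a)
      = (if (g, d, k) = ((\<lambda>_. 0), unitv j, j) then 1 else 0)"
    using assms by (auto simp: unitv_def fun_eq_iff)
  show ?thesis unfolding J xd_def brb_def Let_def
    by (simp only: prod.case shift surviving) simp
qed

lemma ad_diagonal_coeff_eq_0:
  fixes l :: "widx \<Rightarrow> 'a::field_char_0"
  assumes "l \<in> Wnm n m" "ad_diagonal n m l"
    and "valid_idx n m b\<^sub>1" "valid_idx n m b\<^sub>2" "r\<^sub>1 \<noteq> b\<^sub>1" "r\<^sub>2 \<noteq> b\<^sub>2"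
    and difference: "\<And>J. brb n b\<^sub>2 J r\<^sub>2 - brb n b\<^sub>1 J r\<^sub>1 = (if J = J\<^sub>0 then -1 else (0::'a))"
  shows "l J\<^sub>0 = 0"
proof -
  have fin: "finite {j. l j \<noteq> 0}" using assms(1) by (simp add: Wnm_def)
  have off_diagonal: "(\<Sum>J\<in>{j. l j \<noteq> 0}. l J * brb n b J r) = 0"
    if valid: "valid_idx n m b" and off: "r \<noteq> b" for b r
  proof -
    obtain c where "wbr n (wbasis b) l = (\<lambda>r. c * wbasis b r)"
      using assms(2) valid unfolding ad_diagonal_def by blast
    from fun_cong[OF this, of r] show ?thesis
      using off unfolding wbr_wbasis_left by (simp add: wbasis_def)
  qed
  have "(\<Sum>J\<in>{j. l j \<noteq> 0}. l J * (brb n b\<^sub>2 J r\<^sub>2 - brb n b\<^sub>1 J r\<^sub>1)) = 0"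
    using off_diagonal[of b\<^sub>1 r\<^sub>1] off_diagonal[of b\<^sub>2 r\<^sub>2] assms(3-6)
    by (simp add: right_diff_distrib sum_subtractf)
  then have "(\<Sum>J\<in>{j. l j \<noteq> 0}. if J = J\<^sub>0 then - l J else 0) = 0"
    by (simp add: difference if_distrib cong: if_cong)
  then show ?thesis using fin by (auto simp: sum.delta' split: if_splits)
qed

lemma ad_diagonal_support:
  fixes l :: "widx \<Rightarrow> 'a::field_char_0"
  assumes l: "l \<in> Wnm n m" "ad_diagonal n m l" and nz: "l J \<noteq> 0"
  shows "J \<in> xd ` {n..<n+m}"
proof -
  obtain g d j where J: "J = (g, d, j)" by (cases J) auto
  have "valid_idx n m J" using l(1) nz unfolding Wnm_def by blast
  then have j: "j < n + m" by (simp add: J valid_idx_def)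
  have valid_d: "valid_idx n m ((\<lambda>_. 0), (\<lambda>_. 0), j)"
    and valid_xd: "valid_idx n m (xd j)"
    using j by (simp_all add: valid_idx_def xd_def unitv_def)
  have J_xd: "J = xd j"
  proof (rule ccontr)
    assume ne: "J \<noteq> xd j"
    have "l (g, d, j) = 0"
      by (rule ad_diagonal_coeff_eq_0[OF l valid_d valid_xd _ _ brb_xd_minus_brb_d])
         (use ne J in \<open>auto simp: xd_def fun_eq_iff\<close>)
    with nz J show False by simp
  qed
  have "n \<le> j"
  proof (rule ccontr)
    assume "\<not> n \<le> j"
    then have jn: "j < n" by simp
    then have valid_exp: "valid_idx n m (unitv j, (\<lambda>_. 0), j)"
      using j by (simp add: valid_idx_def unitv_def)
    have "l (xd j) = 0"
      by (rule ad_diagonal_coeff_eq_0[OF l valid_d valid_exp _ _ brb_exp_minus_brb_d[OF jn]])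
         (use unitv_neq_0 in \<open>auto simp: xd_def\<close>)
    with nz J_xd show False by simp
  qed
  with J_xd j show ?thesis by auto
qed

lemma torus_elem_xd:
  "t \<in> {n..<n+m} \<Longrightarrow> torus_elem n m c (xd t) = (c t :: 'a::field_char_0)"
  by (simp add: torus_elem_def wbasis_def xd_eq_iff if_distrib cong: if_cong)

lemma torus_elem_outside:
  "r \<notin> xd ` {n..<n+m} \<Longrightarrow> torus_elem n m c r = (0 :: 'a::field_char_0)"
  by (auto simp: torus_elem_def wbasis_def intro!: sum.neutral)

lemma ad_diagonal_imp_torus_elem:
  fixes l :: "widx \<Rightarrow> 'a::field_char_0"
  assumes "l \<in> Wnm n m" "ad_diagonal n m l"
  shows "l = torus_elem n m (\<lambda>t. l (xd t))"
proof
  fix r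
  show "l r = torus_elem n m (\<lambda>t. l (xd t)) r"
  proof (cases "r \<in> xd ` {n..<n+m}")
    case True
    then show ?thesis by (auto simp: torus_elem_xd)
  next
    case False
    then show ?thesis using ad_diagonal_support[OF assms, of r] by (auto simp: torus_elem_outside)
  qed
qed

lemma torus_elem_in_Wnm: "torus_elem n m c \<in> Wnm n m"
proof -
  have support: "{r. torus_elem n m c r \<noteq> 0} \<subseteq> xd ` {n..<n+m}"
    using torus_elem_outside by blast
  moreover have "valid_idx n m (xd t)" if "t \<in> {n..<n+m}" for t
    using that by (auto simp: valid_idx_def xd_def unitv_def)
  ultimately show ?thesis
    unfolding Wnm_def by (auto intro: finite_subset)
qed

lemma brb_xd_right:
  assumes "n \<le> t"
  shows "brb n (\<alpha>, \<beta>, k) (xd t) r =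
    (if r = (\<alpha>, \<beta>, k) then (if k = t then 1 else 0) - of_int (\<beta> t) else (0::'a::field_char_0))"
proof -
  have "(\<lambda>s. \<beta> s + unitv t s - unitv t s) = \<beta>" "(\<lambda>s. \<alpha> s + 0) = \<alpha>" by auto
  with assms show ?thesis unfolding xd_def brb_def Let_def
    by (auto simp: unitv_def)
qed

lemma wbr_wbasis_torus_elem:
  "wbr n (wbasis (\<alpha>, \<beta>, k)) (torus_elem n m c) r =
     (\<Sum>t\<in>{n..<n+m}. c t * ((if k = t then 1 else 0) - of_int (\<beta> t))) * wbasis (\<alpha>, \<beta>, k) r"
  (is "_ = ?eigenvalue * _")
proof -
  let ?l = "torus_elem n m c" and ?b = "(\<alpha>, \<beta>, k)"
  have "wbr n (wbasis ?b) ?l r = (\<Sum>J\<in>{j. ?l j \<noteq> 0}. ?l J * brb n ?b J r)"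
    by (rule wbr_wbasis_left)
  also have "\<dots> = (\<Sum>J\<in>xd ` {n..<n+m}. ?l J * brb n ?b J r)"
    by (rule sum.mono_neutral_left) (auto dest: torus_elem_outside)
  also have "\<dots> = (\<Sum>t\<in>{n..<n+m}. ?l (xd t) * brb n ?b (xd t) r)"
    by (subst sum.reindex) (auto simp: inj_on_def xd_eq_iff)
  also have "\<dots> = (\<Sum>t\<in>{n..<n+m}.
      c t * (if r = ?b then (if k = t then 1 else 0) - of_int (\<beta> t) else 0))"
    by (rule sum.cong) (auto simp: torus_elem_xd brb_xd_right)
  also have "\<dots> = ?eigenvalue * wbasis ?b r"
    by (simp add: wbasis_def sum_distrib_right)
  finally show ?thesis .
qed

lemma ad_diagonal_torus_elem: "ad_diagonal n m (torus_elem n m c)"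
  unfolding ad_diagonal_def
proof (intro allI impI)
  fix b :: widx
  obtain \<alpha> \<beta> k where b: "b = (\<alpha>, \<beta>, k)" by (cases b) auto
  show "\<exists>e. wbr n (wbasis b) (torus_elem n m c) = (\<lambda>r. e * wbasis b r)"
    unfolding b by (intro exI ext) (rule wbr_wbasis_torus_elem)
qed

theorem proposition1:
  fixes n m :: nat
  shows "{l \<in> (Wnm n m :: (widx \<Rightarrow> 'a::field_char_0) set).
            \<forall>b. valid_idx n m b \<longrightarrow> (\<exists>c::'a. wbr n (wbasis b) l = (\<lambda>r. c * wbasis b r))}
         = {l. \<exists>c :: nat \<Rightarrow> 'a. l = (\<lambda>r. \<Sum>t\<in>{n..<n+m}. c t * wbasis (xd t) r)}
       \<and> (\<forall>c :: nat \<Rightarrow> 'a. (\<lambda>r. \<Sum>t\<in>{n..<n+m}. c t * wbasis (xd t) r) = (\<lambda>_. 0)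
            \<longrightarrow> (\<forall>t\<in>{n..<n+m}. c t = 0))"
proof -
  have "{l \<in> Wnm n m. ad_diagonal n m l} = range (torus_elem n m :: _ \<Rightarrow> _ \<Rightarrow> 'a)"
    using ad_diagonal_imp_torus_elem torus_elem_in_Wnm ad_diagonal_torus_elem by blast
  moreover have "c t = 0" if "torus_elem n m c = (\<lambda>_. 0 :: 'a)" "t \<in> {n..<n+m}" for c t
    using torus_elem_xd[OF that(2), of c] that(1) by simp
  ultimately show ?thesis
    unfolding ad_diagonal_def torus_elem_def by blast
qed

end
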